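(* Let $J\in\mathbb{R}^{3\times3}$ be symmetric positive definite and let $R_d\in\mathsf{SO(3)}$ be constant (so $\Omega_d\equiv0$ and $e_\Omega=\Omega$). Let $k_R,k_\Omega>0$ and define the control $$u'=-k_Re_R-k_\Omega e_\Omega,$$ which does not depend on $J$. Consider the closed-loop system $J\dot\Omega+\Omega\times J\Omega=u'$, $\dot R=R\hat\Omega$. If the initial condition satisfies $$\Psi(R(0),R_d)<2,\qquad \|\Omega(0)\|^2<\frac{2k_R}{\lambda_{\max}(J)}\big(2-\Psi(R(0),R_d)\big),$$ then $\Psi(R(t),R_d)<2$ for all $t\ge0$, and the zero equilibrium $(e_R,e_\Omega)=(0,0)$ is exponentially stable with this set contained in its region of attraction: there exist constants $C,\beta>0$ (depending on $J,k_R,k_\Omega$) such that $$\|e_R(t)\|^2+\|e_\Omega(t)\|^2\le C\big(\|e_R(0)\|^2+\|e_\Omega(0)\|^2\big)e^{-\beta t}\quad\text{for all }t\ge0.$$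
   Context: $\mathsf{SO(3)}$ is the group of $3\times3$ rotation matrices; $\hat x$ denotes the skew-symmetric matrix with $\hat x y=x\times y$, and $\vee$ is its inverse. $\Psi(R,R_d)=2-\sqrt{1+\mathrm{tr}(R_d^TR)}$, $e_R=\frac{1}{2\sqrt{1+\mathrm{tr}(R_d^TR)}}(R_d^TR-R^TR_d)^\vee$ (defined when $\Psi<2$), and $e_\Omega=\Omega-R^TR_d\Omega_d$, which equals $\Omega$ here. $\lambda_{\max}(J)$ is the largest eigenvalue of $J$. *)

theory Defs
  imports "HOL-Analysis.Analysis"
begin

definition SO3 :: "(real^3^3) set" where
  "SO3 = {R. transpose R ** R = mat 1 \<and> det R = 1}"

text \<open>hat map: hat x *v y = x cross y.\<close>
definition hat :: "real^3 \<Rightarrow> real^3^3" where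
  "hat x = vector [vector [0, - x$3, x$2],
                   vector [x$3, 0, - x$1],
                   vector [- x$2, x$1, 0]]"

text \<open>vee map, inverse of hat on skew-symmetric matrices.\<close>
definition vee :: "real^3^3 \<Rightarrow> real^3" where
  "vee M = vector [M$3$2, M$1$3, M$2$1]"

definition Psi :: "real^3^3 \<Rightarrow> real^3^3 \<Rightarrow> real" where
  "Psi R Rd = 2 - sqrt (1 + trace (transpose Rd ** R))"

definition eR :: "real^3^3 \<Rightarrow> real^3^3 \<Rightarrow> real^3" where
  "eR R Rd = (1 / (2 * sqrt (1 + trace (transpose Rd ** R))))
              *\<^sub>R vee (transpose Rd ** R - transpose R ** Rd)"

definition eOmega :: "real^3^3 \<Rightarrow> real^3^3 \<Rightarrow> real^3 \<Rightarrow> real^3 \<Rightarrow> real^3" where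
  "eOmega R Rd \<Omega> \<Omega>d = \<Omega> - (transpose R ** Rd) *v \<Omega>d"

definition sym_posdef :: "real^3^3 \<Rightarrow> bool" where
  "sym_posdef J \<longleftrightarrow> transpose J = J \<and> (\<forall>x. x \<noteq> 0 \<longrightarrow> x \<bullet> (J *v x) > 0)"

definition lambda_max :: "real^3^3 \<Rightarrow> real" where
  "lambda_max J = Max {l. \<exists>v. v \<noteq> 0 \<and> J *v v = l *\<^sub>R v}"

end

theory Submission
  imports Defs
begin

(*
  Write Q = Rd^T R for the attitude error, tau = 1 + tr Q and w = sqrt tau / 2 (the cosine of
  half the rotation angle of Q).  Then Psi = 2 - 2 w and eR = axial Q / (2 sqrt tau), where
  axial Q = vee (Q - Q^T); on SO(3) one has |eR|^2 + w^2 = 1 (quaternion normalisation),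
  and along the closed loop  w' = -(eR . Omega)/2  and  eR' = (w Omega + eR x Omega)/2.

  The energy V = Omega . J Omega / 2 + 2 kR (1 - w) = Omega . J Omega / 2 + kR Psi satisfies
  V' = -kO |Omega|^2 while w > 0.  The initial condition is exactly V(0) < 2 kR, so
  2 kR (1 - w) <= V <= V(0) keeps w bounded away from 0; a continuity (barrier) argument
  then gives w > 0, i.e. Psi < 2, for all time.  Adding the cross term c eR . J Omega with a
  small gain c yields a function W comparable to |eR|^2 + |Omega|^2 from above and below
  with W' <= -gamma (|eR|^2 + |Omega|^2), and a comparison lemma gives exponential decay.
*)


section \<open>Identities for 3x3 matrices and rotations\<close>

lemmas mat3_simps = matrix_matrix_mult_def matrix_vector_mult_def transpose_def trace_def sum_3
  vee_def hat_def cross3_def inner_vec_def vec_eq_iff forall_3 mat_def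

text \<open>The axial vector of twice the skew-symmetric part; for a rotation by the angle
  \<open>\<theta>\<close> about the unit axis \<open>n\<close> it equals \<open>2 sin \<theta> n\<close>.\<close>
definition axial :: "real^3^3 \<Rightarrow> real^3" where
  "axial Q = vee (Q - transpose Q)"

lemma hat_transpose: "transpose (hat x) = - hat x"
  by (simp add: mat3_simps)

lemma trace_mult_hat: "trace (Q ** hat x) = - (axial Q \<bullet> x)"
  by (simp add: mat3_simps axial_def algebra_simps)

lemma axial_mult_hat: "axial (Q ** hat x) = trace Q *\<^sub>R x - transpose Q *v x"
  by (simp add: mat3_simps axial_def algebra_simps)

lemma skew_part_mult: "(Q - transpose Q) *v x = cross3 (axial Q) x"
  by (simp add: mat3_simps axial_def algebra_simps)

lemma bounded_linear_axial: "bounded_linear axial"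
  unfolding linear_conv_bounded_linear[symmetric]
  by (rule linearI) (simp_all add: mat3_simps axial_def algebra_simps)

text \<open>Each column of a rotation is the cross product of the two others: the squared
  distance to the cross product expands to \<open>1 - 2 + 1\<close> by orthonormality and
  \<open>det = 1\<close> (Lagrange's identity for the last term).\<close>
lemma column_eq_cofactor:
  fixes a b c d e f g h i :: real
  assumes "a*a + d*d + g*g = 1" "b*b + e*e + h*h = 1" "c*c + f*f + i*i = 1"
    and "b*c + e*f + h*i = 0"
    and "a*(e*i - f*h) + d*(h*c - b*i) + g*(b*f - e*c) = 1"
  shows "a = e*i - f*h \<and> d = h*c - b*i \<and> g = b*f - e*c"
proof -
  have "(a - (e*i - f*h))^2 + (d - (h*c - b*i))^2 + (g - (b*f - e*c))^2
      = (a*a + d*d + g*g) - 2 * (a*(e*i - f*h) + d*(h*c - b*i) + g*(b*f - e*c))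
        + ((b*b + e*e + h*h) * (c*c + f*f + i*i) - (b*c + e*f + h*i)^2)"
    by algebra
  also have "\<dots> = 0" using assms by simp
  finally have "(a - (e*i - f*h))^2 + (d - (h*c - b*i))^2 + (g - (b*f - e*c))^2 = 0" .
  then have "(a - (e*i - f*h))^2 = 0" "(d - (h*c - b*i))^2 = 0" "(g - (b*f - e*c))^2 = 0"
    by (smt (z3) zero_le_power2)+
  then show ?thesis by simp
qed

text \<open>Polynomial identities between the entries of a rotation
  \<open>[[a,b,c],[d,e,f],[g,h,i]]\<close>: the products of the entries of its axial vector
  \<open>(h-f, c-g, d-b)\<close> are \<open>(1 + tr) (Q + Q^T - (tr - 1) I)\<close>.\<close>
lemma rotation_entry_identities:
  fixes a b c d e f g h i :: real
  assumes o: "a*a + d*d + g*g = 1" "b*b + e*e + h*h = 1" "c*c + f*f + i*i = 1"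
    "b*c + e*f + h*i = 0" "a*c + d*f + g*i = 0" "a*b + d*e + g*h = 0"
    and det: "a*e*i + b*f*g + c*d*h - a*f*h - b*d*i - c*e*g = 1"
  shows "(h-f)*(h-f) = (1+a+e+i) * (2*a - (a+e+i) + 1)"
    "(c-g)*(c-g) = (1+a+e+i) * (2*e - (a+e+i) + 1)"
    "(d-b)*(d-b) = (1+a+e+i) * (2*i - (a+e+i) + 1)"
    "(h-f)*(c-g) = (1+a+e+i) * (b+d)"
    "(h-f)*(d-b) = (1+a+e+i) * (c+g)"
    "(c-g)*(d-b) = (1+a+e+i) * (f+h)"
proof -
  have c1: "a = e*i - f*h \<and> d = h*c - b*i \<and> g = b*f - e*c"
    by (rule column_eq_cofactor) (use o det in \<open>simp_all add: algebra_simps\<close>)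
  have c2: "b = f*g - d*i \<and> e = i*a - c*g \<and> h = c*d - f*a"
    by (rule column_eq_cofactor) (use o det in \<open>simp_all add: algebra_simps\<close>)
  have "c = d*h - g*e \<and> f = g*b - a*h \<and> i = a*e - d*b"
    using column_eq_cofactor[of c f i a d g b e h] o det by (simp add: algebra_simps)
  then have c3: "c = d*h - e*g \<and> f = g*b - a*h \<and> i = a*e - b*d" by (simp add: algebra_simps)
  show "(h-f)*(h-f) = (1+a+e+i) * (2*a - (a+e+i) + 1)"
    "(c-g)*(c-g) = (1+a+e+i) * (2*e - (a+e+i) + 1)"
    "(d-b)*(d-b) = (1+a+e+i) * (2*i - (a+e+i) + 1)"
    "(h-f)*(c-g) = (1+a+e+i) * (b+d)"
    "(h-f)*(d-b) = (1+a+e+i) * (c+g)"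
    "(c-g)*(d-b) = (1+a+e+i) * (f+h)"
    using o c1 c2 c3 by algebra+
qed

lemma SO3_entries:
  assumes "Q \<in> SO3"
  shows "Q$1$1*Q$1$1 + Q$2$1*Q$2$1 + Q$3$1*Q$3$1 = 1"
    "Q$1$2*Q$1$2 + Q$2$2*Q$2$2 + Q$3$2*Q$3$2 = 1"
    "Q$1$3*Q$1$3 + Q$2$3*Q$2$3 + Q$3$3*Q$3$3 = 1"
    "Q$1$2*Q$1$3 + Q$2$2*Q$2$3 + Q$3$2*Q$3$3 = 0"
    "Q$1$1*Q$1$3 + Q$2$1*Q$2$3 + Q$3$1*Q$3$3 = 0"
    "Q$1$1*Q$1$2 + Q$2$1*Q$2$2 + Q$3$1*Q$3$2 = 0"
    "Q$1$1*Q$2$2*Q$3$3 + Q$1$2*Q$2$3*Q$3$1 + Q$1$3*Q$2$1*Q$3$2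
       - Q$1$1*Q$2$3*Q$3$2 - Q$1$2*Q$2$1*Q$3$3 - Q$1$3*Q$2$2*Q$3$1 = 1"
proof -
  have "\<And>i j. (transpose Q ** Q)$i$j = (mat 1 :: real^3^3)$i$j" and "det Q = 1"
    using assms by (auto simp: SO3_def)
  then show "Q$1$1*Q$1$1 + Q$2$1*Q$2$1 + Q$3$1*Q$3$1 = 1"
    "Q$1$2*Q$1$2 + Q$2$2*Q$2$2 + Q$3$2*Q$3$2 = 1"
    "Q$1$3*Q$1$3 + Q$2$3*Q$2$3 + Q$3$3*Q$3$3 = 1"
    "Q$1$2*Q$1$3 + Q$2$2*Q$2$3 + Q$3$2*Q$3$3 = 0"
    "Q$1$1*Q$1$3 + Q$2$1*Q$2$3 + Q$3$1*Q$3$3 = 0"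
    "Q$1$1*Q$1$2 + Q$2$1*Q$2$2 + Q$3$1*Q$3$2 = 0"
    "Q$1$1*Q$2$2*Q$3$3 + Q$1$2*Q$2$3*Q$3$1 + Q$1$3*Q$2$1*Q$3$2
       - Q$1$1*Q$2$3*Q$3$2 - Q$1$2*Q$2$1*Q$3$3 - Q$1$3*Q$2$2*Q$3$1 = 1"
    by (simp_all add: matrix_matrix_mult_def transpose_def sum_3 mat_def det_3)
qed

lemma SO3_mult_transpose: "A \<in> SO3 \<Longrightarrow> A ** transpose A = mat 1"
  unfolding SO3_def using matrix_left_right_inverse by blast

text \<open>For a rotation by \<open>\<theta>\<close>: \<open>|2 sin \<theta>|^2 = (1 + tr Q) (3 - tr Q)\<close> with \<open>tr Q = 1 + 2 cos \<theta>\<close>.\<close>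
lemma SO3_norm_axial:
  assumes "Q \<in> SO3"
  shows "(norm (axial Q))^2 = (1 + trace Q) * (3 - trace Q)"
proof -
  have "(norm (axial Q))^2 = (Q$3$2 - Q$2$3)*(Q$3$2 - Q$2$3) + (Q$1$3 - Q$3$1)*(Q$1$3 - Q$3$1)
      + (Q$2$1 - Q$1$2)*(Q$2$1 - Q$1$2)"
    by (simp add: power2_norm_eq_inner axial_def mat3_simps)
  then show ?thesis
    using rotation_entry_identities(1-3)[OF SO3_entries[OF assms]]
    by (simp add: trace_def sum_3 algebra_simps)
qed

lemma SO3_axial_outer:
  assumes "Q \<in> SO3"
  shows "(axial Q \<bullet> x) *\<^sub>R axial Q
       = (1 + trace Q) *\<^sub>R ((Q + transpose Q) *v x - (trace Q - 1) *\<^sub>R x)"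
proof -
  define A1 where "A1 = Q$3$2 - Q$2$3"
  define A2 where "A2 = Q$1$3 - Q$3$1"
  define A3 where "A3 = Q$2$1 - Q$1$2"
  define s where "s = 1 + Q$1$1 + Q$2$2 + Q$3$3"
  note E = rotation_entry_identities(1-6)[OF SO3_entries[OF assms], folded A1_def A2_def A3_def s_def]
  have axial: "axial Q = vector [A1, A2, A3]"
    unfolding axial_def A1_def A2_def A3_def by (simp add: mat3_simps)
  have tr: "trace Q = s - 1" unfolding s_def by (simp add: trace_def sum_3)
  have c1: "(A1 * x$1 + A2 * x$2 + A3 * x$3) * A1
      = s * ((2*Q$1$1 - (Q$1$1 + Q$2$2 + Q$3$3) + 1) * x$1 + (Q$1$2 + Q$2$1) * x$2 + (Q$1$3 + Q$3$1) * x$3)"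
  proof -
    have "(A1 * x$1 + A2 * x$2 + A3 * x$3) * A1 = x$1 * (A1*A1) + x$2 * (A1*A2) + x$3 * (A1*A3)"
      by (simp add: algebra_simps)
    then show ?thesis unfolding E by (simp add: algebra_simps)
  qed
  have c2: "(A1 * x$1 + A2 * x$2 + A3 * x$3) * A2
      = s * ((Q$1$2 + Q$2$1) * x$1 + (2*Q$2$2 - (Q$1$1 + Q$2$2 + Q$3$3) + 1) * x$2 + (Q$2$3 + Q$3$2) * x$3)"
  proof -
    have "(A1 * x$1 + A2 * x$2 + A3 * x$3) * A2 = x$1 * (A1*A2) + x$2 * (A2*A2) + x$3 * (A2*A3)"
      by (simp add: algebra_simps)
    then show ?thesis unfolding E by (simp add: algebra_simps)
  qed
  have c3: "(A1 * x$1 + A2 * x$2 + A3 * x$3) * A3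
      = s * ((Q$1$3 + Q$3$1) * x$1 + (Q$2$3 + Q$3$2) * x$2 + (2*Q$3$3 - (Q$1$1 + Q$2$2 + Q$3$3) + 1) * x$3)"
  proof -
    have "(A1 * x$1 + A2 * x$2 + A3 * x$3) * A3 = x$1 * (A1*A3) + x$2 * (A2*A3) + x$3 * (A3*A3)"
      by (simp add: algebra_simps)
    then show ?thesis unfolding E by (simp add: algebra_simps)
  qed
  show ?thesis unfolding axial tr
    apply (simp add: mat3_simps)
    apply (intro conjI)
      apply (subst c1, simp add: s_def algebra_simps)
     apply (subst c2, simp add: s_def algebra_simps)
    apply (subst c3, simp add: s_def algebra_simps)
    done
qed


section \<open>Quadratic forms and the largest eigenvalue\<close>

lemma symmetric_inner_swap:
  fixes J :: "real^'n^'n"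
  assumes "transpose J = J"
  shows "x \<bullet> (J *v y) = (J *v x) \<bullet> y"
  by (metis assms dot_lmul_matrix vector_transpose_matrix)

text \<open>A positive semidefinite symmetric matrix annihilates every vector on which its
  quadratic form vanishes (minimise \<open>s \<mapsto> (u + s M u) \<bullet> M (u + s M u)\<close>).\<close>
lemma psd_null_vector:
  fixes M :: "real^'n^'n"
  assumes sym: "transpose M = M" and psd: "\<And>x. x \<bullet> (M *v x) \<ge> 0" and u: "u \<bullet> (M *v u) = 0"
  shows "M *v u = 0"
proof -
  let ?y = "M *v u"
  define B where "B = ?y \<bullet> (M *v ?y)"
  have B0: "B \<ge> 0" unfolding B_def by (rule psd)
  have line: "0 \<le> 2 * s * (?y \<bullet> ?y) + s^2 * B" for s :: real
  proof -
    have "0 \<le> (u + s *\<^sub>R ?y) \<bullet> (M *v (u + s *\<^sub>R ?y))" by (rule psd)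
    also have "\<dots> = u \<bullet> (M *v u) + s * (u \<bullet> (M *v ?y)) + s * (?y \<bullet> (M *v u)) + s^2 * B"
      by (simp add: B_def matrix_vector_right_distrib matrix_vector_mult_scaleR inner_add_left
          inner_add_right power2_eq_square algebra_simps)
    also have "u \<bullet> (M *v ?y) = ?y \<bullet> ?y" using symmetric_inner_swap[OF sym, of u ?y] by simp
    finally show ?thesis using u by simp
  qed
  have "?y \<bullet> ?y = 0"
  proof (rule ccontr)
    assume "?y \<bullet> ?y \<noteq> 0"
    then have pos: "?y \<bullet> ?y > 0" by (simp add: order_le_neq_trans)
    define s where "s = - (?y \<bullet> ?y) / (B + 1)"
    have s_neg: "s < 0" unfolding s_def using pos B0 by (simp add: divide_neg_pos)
    have "s^2 * B \<le> s^2 * (B + 1)" by (simp add: mult_left_mono)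
    also have "\<dots> = s * (- (?y \<bullet> ?y))" unfolding s_def using B0 by (simp add: power2_eq_square)
    finally have "0 \<le> s * (?y \<bullet> ?y)" using line[of s] by simp
    with mult_neg_pos[OF s_neg pos] show False by linarith
  qed
  then show ?thesis by simp
qed

lemma quadratic_form_normalize:
  fixes J :: "real^'n^'n"
  shows "(x /\<^sub>R norm x) \<bullet> (J *v (x /\<^sub>R norm x)) = (x \<bullet> (J *v x)) / (norm x)^2"
  by (simp add: matrix_vector_mult_scaleR power2_eq_square divide_inverse ac_simps)

text \<open>A quadratic form attains its maximum and its minimum on the unit sphere, and by
  homogeneity these bound it everywhere.\<close>
lemma quadratic_form_max:
  fixes J :: "real^'n^'n"
  shows "\<exists>u. norm u = 1 \<and> (\<forall>x. x \<bullet> (J *v x) \<le> (u \<bullet> (J *v u)) * (norm x)^2)"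
proof -
  have "\<exists>u\<in>sphere 0 1. \<forall>y\<in>sphere 0 1. y \<bullet> (J *v y) \<le> u \<bullet> (J *v u)"
    by (rule continuous_attains_sup) (auto intro!: continuous_intros)
  then obtain u where u: "norm u = 1"
    and max: "\<And>y. norm y = 1 \<Longrightarrow> y \<bullet> (J *v y) \<le> u \<bullet> (J *v u)"
    by auto
  have "x \<bullet> (J *v x) \<le> (u \<bullet> (J *v u)) * (norm x)^2" for x
  proof (cases "x = 0")
    case False
    then have "norm (x /\<^sub>R norm x) = 1" by simp
    from max[OF this] have "(x \<bullet> (J *v x)) / (norm x)^2 \<le> u \<bullet> (J *v u)"
      unfolding quadratic_form_normalize .
    then show ?thesis using False by (simp add: divide_le_eq)
  qed simp
  with u show ?thesis by blast
qed

lemma quadratic_form_min: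
  fixes J :: "real^'n^'n"
  shows "\<exists>u. norm u = 1 \<and> (\<forall>x. (u \<bullet> (J *v u)) * (norm x)^2 \<le> x \<bullet> (J *v x))"
proof -
  have "\<exists>u\<in>sphere 0 1. \<forall>y\<in>sphere 0 1. u \<bullet> (J *v u) \<le> y \<bullet> (J *v y)"
    by (rule continuous_attains_inf) (auto intro!: continuous_intros)
  then obtain u where u: "norm u = 1"
    and min: "\<And>y. norm y = 1 \<Longrightarrow> u \<bullet> (J *v u) \<le> y \<bullet> (J *v y)"
    by auto
  have "(u \<bullet> (J *v u)) * (norm x)^2 \<le> x \<bullet> (J *v x)" for x
  proof (cases "x = 0")
    case False
    then have "norm (x /\<^sub>R norm x) = 1" by simp
    from min[OF this] have "u \<bullet> (J *v u) \<le> (x \<bullet> (J *v x)) / (norm x)^2"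
      unfolding quadratic_form_normalize .
    then show ?thesis using False by (simp add: le_divide_eq)
  qed simp
  with u show ?thesis by blast
qed

text \<open>A symmetric matrix has finitely many eigenvalues: eigenvectors for distinct
  eigenvalues are orthogonal, hence independent.\<close>
lemma finite_eigenvalues:
  fixes J :: "real^'n^'n"
  assumes sym: "transpose J = J"
  shows "finite {l. \<exists>v. v \<noteq> 0 \<and> J *v v = l *\<^sub>R v}"
proof -
  define S where "S = {l. \<exists>v. v \<noteq> 0 \<and> J *v v = l *\<^sub>R v}"
  define ev where "ev l = (SOME v. v \<noteq> 0 \<and> J *v v = l *\<^sub>R v)" for l
  have ev: "ev l \<noteq> 0 \<and> J *v ev l = l *\<^sub>R ev l" if "l \<in> S" for l
    using that unfolding S_def ev_def by (metis (mono_tags, lifting) mem_Collect_eq someI_ex)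
  have orth: "ev l \<bullet> ev m = 0" if "l \<in> S" "m \<in> S" "l \<noteq> m" for l m
  proof -
    have "l * (ev l \<bullet> ev m) = (J *v ev l) \<bullet> ev m" using ev[OF that(1)] by simp
    also have "\<dots> = ev l \<bullet> (J *v ev m)" using symmetric_inner_swap[OF sym] by simp
    also have "\<dots> = m * (ev l \<bullet> ev m)" using ev[OF that(2)] by simp
    finally show ?thesis using that(3) by simp
  qed
  have "inj_on ev S"
  proof (rule inj_onI)
    fix l m assume l: "l \<in> S" and m: "m \<in> S" and eq: "ev l = ev m"
    show "l = m"
    proof (rule ccontr)
      assume "l \<noteq> m"
      then have "ev l \<bullet> ev l = 0" using orth[OF l m] eq by simp
      then show False using ev[OF l] by simp
    qed
  qed
  moreover have "independent (ev ` S)"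
  proof (rule pairwise_orthogonal_independent)
    show "pairwise orthogonal (ev ` S)"
      unfolding pairwise_def orthogonal_def
    proof (intro ballI impI)
      fix x y assume "x \<in> ev ` S" "y \<in> ev ` S" "x \<noteq> y"
      then obtain l m where "l \<in> S" "m \<in> S" "x = ev l" "y = ev m" "l \<noteq> m" by blast
      then show "x \<bullet> y = 0" using orth by simp
    qed
    show "0 \<notin> ev ` S" using ev by auto
  qed
  then have "finite (ev ` S)" using independent_bound by blast
  ultimately show ?thesis unfolding S_def[symmetric] using finite_imageD by blast
qed

text \<open>The maximum of the quadratic form on the unit sphere is an eigenvalue, so
  \<open>lambda_max J\<close> bounds the form; this is how the hypothesis on \<open>\<Omega>(0)\<close> enters.\<close>
lemma lambda_max_bound:
  assumes J: "sym_posdef J"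
  shows "lambda_max J > 0" "x \<bullet> (J *v x) \<le> lambda_max J * (norm x)^2"
proof -
  have sym: "transpose J = J" and pd: "\<And>x. x \<noteq> 0 \<Longrightarrow> x \<bullet> (J *v x) > 0"
    using J by (auto simp: sym_posdef_def)
  obtain u where u: "norm u = 1" and max: "\<And>x. x \<bullet> (J *v x) \<le> (u \<bullet> (J *v u)) * (norm x)^2"
    using quadratic_form_max[of J] by blast
  define mu where "mu = u \<bullet> (J *v u)"
  define M where "M = mu *\<^sub>R mat 1 - J"
  have Mx: "M *v x = mu *\<^sub>R x - J *v x" for x
    unfolding M_def by (simp add: vec_eq_iff matrix_vector_mult_def mat_def sum_3 algebra_simps forall_3)
  have "M *v u = 0"
  proof (rule psd_null_vector)
    have "J$j$i = J$i$j" for i j using arg_cong[OF sym, of "\<lambda>A. A$i$j"] by (simp add: transpose_def)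
    then show "transpose M = M" unfolding M_def by (simp add: vec_eq_iff transpose_def mat_def)
    show "0 \<le> x \<bullet> (M *v x)" for x
      using max[of x] by (simp add: Mx inner_diff_right power2_norm_eq_inner mu_def)
    show "u \<bullet> (M *v u) = 0"
      using u by (simp add: Mx inner_diff_right mu_def power2_norm_eq_inner[symmetric])
  qed
  then have "J *v u = mu *\<^sub>R u" by (simp add: Mx)
  moreover have "u \<noteq> 0" using u by auto
  ultimately have "mu \<in> {l. \<exists>v. v \<noteq> 0 \<and> J *v v = l *\<^sub>R v}" by blast
  from Max_ge[OF finite_eigenvalues[OF sym] this] have mu_le: "mu \<le> lambda_max J"
    unfolding lambda_max_def .
  have "mu > 0" using pd[OF \<open>u \<noteq> 0\<close>] unfolding mu_def .
  then show "lambda_max J > 0" using mu_le by linarith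
  have "x \<bullet> (J *v x) \<le> mu * (norm x)^2" using max[of x] by (simp add: mu_def)
  also have "\<dots> \<le> lambda_max J * (norm x)^2" using mu_le by (rule mult_right_mono) simp
  finally show "x \<bullet> (J *v x) \<le> lambda_max J * (norm x)^2" .
qed


section \<open>Calculus: derivatives of matrix curves, a barrier and a comparison lemma\<close>

text \<open>Matrix multiplication is bilinear and transpose and trace are linear, so the product
  rule applies to matrix-valued curves.\<close>

lemma bounded_bilinear_matrix_mult:
  "bounded_bilinear ((**) :: real^'n^'m \<Rightarrow> real^'p^'n \<Rightarrow> real^'p^'m)"
  unfolding bilinear_conv_bounded_bilinear[symmetric] bilinear_def
  by (auto intro!: linearI simp: vec_eq_iff matrix_matrix_mult_def sum.distrib
      sum_distrib_left algebra_simps)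

lemma bounded_linear_transpose: "bounded_linear (transpose :: real^'n^'m \<Rightarrow> real^'m^'n)"
  unfolding linear_conv_bounded_linear[symmetric]
  by (rule linearI) (simp_all add: vec_eq_iff transpose_def)

lemma bounded_linear_trace: "bounded_linear (trace :: real^'n^'n \<Rightarrow> real)"
  unfolding linear_conv_bounded_linear[symmetric]
  by (rule linearI) (simp_all add: trace_def sum.distrib sum_distrib_left)

lemma at_within_nonneg: "x > 0 \<Longrightarrow> at x within {0..} = at (x::real)"
  by (rule at_within_interior) simp

text \<open>Barrier argument: a continuous function that stays \<open>\<ge> a > 0\<close> as long as it
  has been positive is positive forever (look at the first time it equals \<open>a/2\<close>).\<close>
lemma positivity_barrier:
  fixes f :: "real \<Rightarrow> real" and a t :: real
  assumes cont: "continuous_on {0..} f" and a: "a > 0" and f0: "f 0 > 0"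
    and barrier: "\<And>T. T \<ge> 0 \<Longrightarrow> (\<And>u. 0 \<le> u \<Longrightarrow> u \<le> T \<Longrightarrow> f u > 0) \<Longrightarrow> f T \<ge> a"
    and t: "t \<ge> 0"
  shows "f t > 0"
proof (rule ccontr)
  assume "\<not> f t > 0"
  have cont_on: "continuous_on {0..s} f" for s by (rule continuous_on_subset[OF cont]) auto
  have "f 0 \<ge> a" using barrier[of 0] f0 by simp
  then have hits: "\<exists>x. 0 \<le> x \<and> x \<le> s \<and> f x = a / 2" if "s \<ge> 0" "f s \<le> a / 2" for s
    using IVT2'[OF that(2) _ that(1) cont_on] a by simp
  define K where "K = {x \<in> {0..t}. f x = a / 2}"
  have nonempty: "K \<noteq> {}" using hits[OF t] \<open>\<not> f t > 0\<close> a unfolding K_def by auto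
  have "compact K" unfolding compact_eq_bounded_closed
  proof
    show "bounded K" unfolding K_def by (rule bounded_subset[OF bounded_closed_interval]) auto
    show "closed K" unfolding K_def by (rule continuous_closed_preimage_constant[OF cont_on]) simp
  qed
  then obtain T where T: "T \<in> K" and first: "\<And>x. x \<in> K \<Longrightarrow> T \<le> x"
    using compact_attains_inf[OF _ nonempty] by auto
  have T0: "T \<ge> 0" and fT: "f T = a / 2" and Tt: "T \<le> t" using T by (auto simp: K_def)
  have "f u > 0" if u: "0 \<le> u" "u \<le> T" for u
  proof (rule ccontr)
    assume "\<not> f u > 0"
    then obtain x where x: "0 \<le> x" "x \<le> u" "f x = a / 2" using hits[OF u(1)] a by force
    then have "T \<le> x" using u Tt by (intro first) (auto simp: K_def)
    then have "u = x" using x(2) u(2) by linarith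
    then show False using x(3) \<open>\<not> f u > 0\<close> a by simp
  qed
  then have "f T \<ge> a" by (rule barrier[OF T0])
  then show False using fT a by simp
qed

text \<open>Comparison lemma: \<open>f' \<le> -\<beta> f\<close> implies \<open>f t \<le> f 0 e^{-\<beta> t}\<close>
  (the function \<open>f e^{\<beta> t}\<close> is nonincreasing).\<close>
lemma exponential_decay_comparison:
  fixes f f' :: "real \<Rightarrow> real" and \<beta> t :: real
  assumes t: "t \<ge> 0" and cont: "continuous_on {0..t} f"
    and deriv: "\<And>x. 0 < x \<Longrightarrow> x < t \<Longrightarrow> (f has_real_derivative f' x) (at x)"
    and ineq: "\<And>x. 0 < x \<Longrightarrow> x < t \<Longrightarrow> f' x \<le> - \<beta> * f x"
  shows "f t \<le> f 0 * exp (- \<beta> * t)"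
proof -
  define g where "g s = f s * exp (\<beta> * s)" for s
  have "g t \<le> g 0"
  proof (rule DERIV_nonpos_imp_decreasing_open[OF t])
    fix x assume x: "0 < x" "x < t"
    have "(g has_real_derivative (f' x + \<beta> * f x) * exp (\<beta> * x)) (at x)"
      unfolding g_def[abs_def]
      by (rule derivative_eq_intros deriv[OF x] refl | simp add: algebra_simps)+
    moreover have "(f' x + \<beta> * f x) * exp (\<beta> * x) \<le> 0"
      using ineq[OF x] by (simp add: mult_nonpos_nonneg)
    ultimately show "\<exists>y. (g has_real_derivative y) (at x) \<and> y \<le> 0" by blast
  next
    show "continuous_on {0..t} g" unfolding g_def[abs_def] by (intro continuous_intros cont)
  qed
  then show ?thesis by (simp add: g_def exp_minus field_simps)
qed


section \<open>Pointwise Lyapunov estimates\<close>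

text \<open>Here \<open>v\<close> and \<open>w\<close> stand for \<open>eR\<close> and the half-angle cosine, \<open>Om\<close> for the
  angular velocity and \<open>JOm\<close> for \<open>J \<Omega>\<close>; only the constraint \<open>|v|^2 + w^2 = 1\<close> and
  bounds on \<open>J\<close> are used.\<close>

lemma half_angle_bounds:
  fixes v :: "'a::real_normed_vector" and w :: real
  assumes w0: "w > 0" and unit: "(norm v)^2 + w^2 = 1"
  shows "w \<le> 1" "norm v \<le> 1" "1 - w \<le> (norm v)^2" "(norm v)^2 \<le> 2 * (1 - w)"
proof -
  have "w^2 \<le> 1" "(norm v)^2 \<le> 1" using unit zero_le_power2[of w] zero_le_power2[of "norm v"]
    by linarith+
  then show w1: "w \<le> 1" and "norm v \<le> 1" using power2_le_imp_le[of _ 1] by auto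
  have factor: "(norm v)^2 = (1 - w) * (1 + w)"
    using unit by (simp add: algebra_simps power2_eq_square)
  have "(1 - w) * 1 \<le> (1 - w) * (1 + w)" "(1 - w) * (1 + w) \<le> (1 - w) * 2"
    using w0 w1 by (intro mult_left_mono; simp)+
  then show "1 - w \<le> (norm v)^2" "(norm v)^2 \<le> 2 * (1 - w)" unfolding factor by simp_all
qed

lemma norm_cross_le: "norm (cross3 x y) \<le> norm x * norm y"
proof -
  have "(norm (cross3 x y))^2 \<le> (norm x * norm y)^2"
    using norm_cross_dot[of x y] zero_le_power2[of "x \<bullet> y"] by linarith
  then show ?thesis by (rule power2_le_imp_le) simp
qed

lemma abs_inner_le_mean_square:
  fixes v x y :: "'a::real_inner" and K :: real
  assumes y: "norm y \<le> K * norm x" and K: "K \<ge> 0"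
  shows "\<bar>v \<bullet> y\<bar> \<le> K / 2 * ((norm v)^2 + (norm x)^2)"
proof -
  have "\<bar>v \<bullet> y\<bar> \<le> norm v * norm y" by (rule Cauchy_Schwarz_ineq2)
  also have "\<dots> \<le> norm v * (K * norm x)" using y by (rule mult_left_mono) simp
  also have "\<dots> = K / 2 * (2 * norm v * norm x)" by simp
  also have "\<dots> \<le> K / 2 * ((norm v)^2 + (norm x)^2)"
    using sum_squares_bound[of "norm v" "norm x"] K by (intro mult_left_mono) auto
  finally show ?thesis .
qed

lemma min_weighted_sum_le:
  fixes a b x y :: real
  assumes "x \<ge> 0" "y \<ge> 0"
  shows "min a b * (x + y) \<le> a * x + b * y"
proof -
  have "min a b * x \<le> a * x" "min a b * y \<le> b * y"
    using assms by (simp_all add: mult_right_mono)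
  then show ?thesis by (simp add: distrib_left)
qed

lemma lyapunov_lower_bound:
  fixes v Om JOm :: "real^3" and w K lm c kR :: real
  assumes w0: "w > 0" and unit: "(norm v)^2 + w^2 = 1"
    and JK: "norm JOm \<le> K * norm Om" and K: "K \<ge> 0"
    and Jl: "lm * (norm Om)^2 \<le> Om \<bullet> JOm"
    and c: "c \<ge> 0" and cK_lm: "c * K \<le> lm / 2" and cK_kR: "c * K \<le> kR"
  shows "min (lm/4) (kR/2) * ((norm v)^2 + (norm Om)^2)
           \<le> Om \<bullet> JOm / 2 + 2 * kR * (1 - w) + c * (v \<bullet> JOm)"
proof -
  define p where "p = norm v"
  define q where "q = norm Om"
  have kR: "kR \<ge> 0" using c K cK_kR by (meson mult_nonneg_nonneg order_trans)
  have cross: "c * \<bar>v \<bullet> JOm\<bar> \<le> (c * K / 2) * (p^2 + q^2)"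
  proof -
    have "c * \<bar>v \<bullet> JOm\<bar> \<le> c * (K / 2 * (p^2 + q^2))"
      using abs_inner_le_mean_square[OF JK K] c unfolding p_def q_def by (rule mult_left_mono)
    then show ?thesis by simp
  qed
  have "lm * q^2 / 2 + kR * p^2 - (c * K / 2) * (p^2 + q^2)
          \<le> Om \<bullet> JOm / 2 + 2 * kR * (1 - w) + c * (v \<bullet> JOm)"
  proof -
    have "- (c * \<bar>v \<bullet> JOm\<bar>) \<le> c * (v \<bullet> JOm)" using mult_left_mono[OF abs_ge_minus_self[of "v \<bullet> JOm"] c] by simp
    moreover have "kR * p^2 \<le> 2 * kR * (1 - w)"
      using mult_left_mono[OF half_angle_bounds(4)[OF w0 unit] kR] by (simp add: p_def algebra_simps)
    moreover have "lm * q^2 \<le> Om \<bullet> JOm" using Jl by (simp add: q_def)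
    ultimately show ?thesis using cross by linarith
  qed
  moreover have "(lm/4) * q^2 + (kR/2) * p^2 \<le> lm * q^2 / 2 + kR * p^2 - (c * K / 2) * (p^2 + q^2)"
  proof -
    have coeff: "c * K / 2 \<le> lm / 4" "c * K / 2 \<le> kR / 2" using cK_lm cK_kR by linarith+
    have "(c * K / 2) * q^2 \<le> (lm/4) * q^2" by (rule mult_right_mono[OF coeff(1)]) simp
    moreover have "(c * K / 2) * p^2 \<le> (kR/2) * p^2" by (rule mult_right_mono[OF coeff(2)]) simp
    ultimately show ?thesis by (simp add: algebra_simps)
  qed
  moreover have "min (lm/4) (kR/2) * (p^2 + q^2) \<le> (lm/4) * q^2 + (kR/2) * p^2"
    using min_weighted_sum_le[of "q^2" "p^2" "lm/4" "kR/2"] by (simp add: ac_simps)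
  ultimately show ?thesis unfolding p_def q_def by linarith
qed

lemma lyapunov_upper_bound:
  fixes v Om JOm :: "real^3" and w K c kR :: real
  assumes w0: "w > 0" and unit: "(norm v)^2 + w^2 = 1"
    and JK: "norm JOm \<le> K * norm Om" and K: "K \<ge> 0" and kR: "kR \<ge> 0" and c: "c \<ge> 0"
  shows "Om \<bullet> JOm / 2 + 2 * kR * (1 - w) + c * (v \<bullet> JOm)
           \<le> (K + 2 * kR + c * K) * ((norm v)^2 + (norm Om)^2)"
proof -
  define p where "p = norm v"
  define q where "q = norm Om"
  have kin: "Om \<bullet> JOm \<le> K * q^2"
  proof -
    have "Om \<bullet> JOm \<le> norm Om * norm JOm" by (rule norm_cauchy_schwarz)
    also have "\<dots> \<le> norm Om * (K * norm Om)" using JK by (rule mult_left_mono) simp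
    finally show ?thesis by (simp add: q_def power2_eq_square ac_simps)
  qed
  have cross: "c * \<bar>v \<bullet> JOm\<bar> \<le> (c * K / 2) * (p^2 + q^2)"
  proof -
    have "c * \<bar>v \<bullet> JOm\<bar> \<le> c * (K / 2 * (p^2 + q^2))"
      using abs_inner_le_mean_square[OF JK K] c unfolding p_def q_def by (rule mult_left_mono)
    then show ?thesis by simp
  qed
  have "c * (v \<bullet> JOm) \<le> c * \<bar>v \<bullet> JOm\<bar>" using mult_left_mono[OF abs_ge_self[of "v \<bullet> JOm"] c] .
  moreover have "2 * kR * (1 - w) \<le> 2 * kR * p^2"
    using half_angle_bounds(3)[OF w0 unit] kR by (simp add: p_def mult_left_mono)
  ultimately have "Om \<bullet> JOm / 2 + 2 * kR * (1 - w) + c * (v \<bullet> JOm)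
      \<le> K * q^2 / 2 + 2 * kR * p^2 + (c * K / 2) * (p^2 + q^2)"
    using kin cross by linarith
  also have "\<dots> \<le> (K + 2 * kR + c * K) * (p^2 + q^2)"
  proof -
    have "0 \<le> K * q^2" "0 \<le> K * p^2" "0 \<le> kR * q^2" "0 \<le> c * K * (p^2 + q^2)"
      using K kR c by simp_all
    then show ?thesis by (simp add: algebra_simps)
  qed
  finally show ?thesis unfolding p_def q_def .
qed

lemma norm_eR_rate_le:
  fixes v Om :: "real^3" and w :: real
  assumes w0: "w > 0" and unit: "(norm v)^2 + w^2 = 1"
  shows "norm ((1/2) *\<^sub>R (w *\<^sub>R Om + cross3 v Om)) \<le> norm Om"
proof -
  have "norm (w *\<^sub>R Om) \<le> norm Om"
    using w0 half_angle_bounds(1)[OF w0 unit] by (simp add: mult_left_le_one_le)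
  moreover have "norm (cross3 v Om) \<le> norm Om"
    using norm_cross_le[of v Om] mult_right_mono[OF half_angle_bounds(2)[OF w0 unit], of "norm Om"]
    by simp
  ultimately show ?thesis using norm_triangle_ineq[of "w *\<^sub>R Om" "cross3 v Om"] by simp
qed

text \<open>Decrease: along the closed loop
  \<open>W' = -kO |\<Omega>|^2 + c (v' \<bullet> J\<Omega> + v \<bullet> J\<Omega>')\<close> with
  \<open>J\<Omega>' = -\<Omega> \<times> J\<Omega> - kR v - kO \<Omega>\<close>; for small \<open>c\<close> this is
  \<open>\<le> -\<gamma> (|v|^2 + |\<Omega>|^2)\<close>.\<close>
lemma lyapunov_decrease_bound:
  fixes v Om JOm :: "real^3" and w K c kR kO :: real
  assumes w0: "w > 0" and unit: "(norm v)^2 + w^2 = 1"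
    and JK: "norm JOm \<le> K * norm Om" and K: "K \<ge> 0"
    and kR: "kR > 0" and c: "c \<ge> 0" and c_small: "c * (2*K + kO^2 / (2*kR)) \<le> kO / 2"
  shows "- kO * (norm Om)^2 + c * (((1/2) *\<^sub>R (w *\<^sub>R Om + cross3 v Om)) \<bullet> JOm
            + v \<bullet> (- cross3 Om JOm - kR *\<^sub>R v - kO *\<^sub>R Om))
         \<le> - min (kO/2) (c * kR / 2) * ((norm v)^2 + (norm Om)^2)"
proof -
  define p where "p = norm v"
  define q where "q = norm Om"
  define vd where "vd = (1/2) *\<^sub>R (w *\<^sub>R Om + cross3 v Om)"
  have q0: "q \<ge> 0" by (simp add: q_def)
  have JOq: "norm JOm \<le> K * q" using JK by (simp add: q_def)
  have rate: "\<bar>vd \<bullet> JOm\<bar> \<le> K * q^2"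
  proof -
    have "\<bar>vd \<bullet> JOm\<bar> \<le> norm vd * norm JOm" by (rule Cauchy_Schwarz_ineq2)
    also have "\<dots> \<le> q * (K * q)"
      using norm_eR_rate_le[OF w0 unit] JOq q0 unfolding vd_def q_def by (intro mult_mono) auto
    finally show ?thesis by (simp add: power2_eq_square algebra_simps)
  qed
  have gyro: "\<bar>v \<bullet> cross3 Om JOm\<bar> \<le> K * q^2"
  proof -
    have "\<bar>v \<bullet> cross3 Om JOm\<bar> \<le> p * norm (cross3 Om JOm)"
      using Cauchy_Schwarz_ineq2 by (simp add: p_def)
    also have "\<dots> \<le> 1 * (q * (K * q))"
    proof (rule mult_mono)
      show "p \<le> 1" using half_angle_bounds(2)[OF w0 unit] by (simp add: p_def)
      have "norm (cross3 Om JOm) \<le> q * norm JOm" using norm_cross_le[of Om JOm] by (simp add: q_def)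
      also have "\<dots> \<le> q * (K * q)" using JOq q0 by (rule mult_left_mono)
      finally show "norm (cross3 Om JOm) \<le> q * (K * q)" .
    qed (use q0 K in auto)
    finally show ?thesis by (simp add: power2_eq_square algebra_simps)
  qed
  have young: "- (kO * (v \<bullet> Om)) \<le> kR * p^2 / 2 + kO^2 * q^2 / (2*kR)"
  proof -
    have "- (kO * (v \<bullet> Om)) \<le> \<bar>kO\<bar> * (p * q)"
      using mult_left_mono[OF Cauchy_Schwarz_ineq2[of v Om] abs_ge_zero[of kO]]
        abs_ge_minus_self[of "kO * (v \<bullet> Om)"]
      by (simp add: p_def q_def abs_mult)
    moreover have "2 * kR * (\<bar>kO\<bar> * (p*q)) \<le> kR^2 * p^2 + kO^2 * q^2"
      using zero_le_power2[of "kR * p - \<bar>kO\<bar> * q"] by (simp add: power2_eq_square algebra_simps)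
    then have "\<bar>kO\<bar> * (p*q) \<le> kR * p^2 / 2 + kO^2 * q^2 / (2*kR)"
      using kR by (simp add: field_simps power2_eq_square)
    ultimately show ?thesis by linarith
  qed
  have "vd \<bullet> JOm + v \<bullet> (- cross3 Om JOm - kR *\<^sub>R v - kO *\<^sub>R Om)
      = vd \<bullet> JOm - v \<bullet> cross3 Om JOm - kR * p^2 - kO * (v \<bullet> Om)"
    by (simp add: inner_diff_right p_def power2_norm_eq_inner)
  also have "\<dots> \<le> (2*K + kO^2 / (2*kR)) * q^2 - kR * p^2 / 2"
    using rate gyro young by (simp add: algebra_simps abs_le_iff)
  finally have bracket: "vd \<bullet> JOm + v \<bullet> (- cross3 Om JOm - kR *\<^sub>R v - kO *\<^sub>R Om)
      \<le> (2*K + kO^2 / (2*kR)) * q^2 - kR * p^2 / 2" .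
  have "- kO * q^2 + c * (vd \<bullet> JOm + v \<bullet> (- cross3 Om JOm - kR *\<^sub>R v - kO *\<^sub>R Om))
      \<le> - kO * q^2 + (c * (2*K + kO^2 / (2*kR))) * q^2 - (c * kR / 2) * p^2"
    using mult_left_mono[OF bracket c] by (simp add: algebra_simps)
  also have "\<dots> \<le> - ((kO/2) * q^2 + (c * kR / 2) * p^2)"
    using mult_right_mono[OF c_small, of "q^2"] by simp
  also have "\<dots> \<le> - (min (kO/2) (c * kR / 2) * (p^2 + q^2))"
    using min_weighted_sum_le[of "q^2" "p^2" "kO/2" "c * kR / 2"] by (simp add: ac_simps)
  finally show ?thesis unfolding vd_def p_def q_def by simp
qed


lemma lyapunov_constants:
  fixes kR kO :: real
  assumes J: "sym_posdef J" and kR: "kR > 0" and kO: "kO > 0"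
  obtains K lm c where "K > 0" "\<And>x. norm (J *v x) \<le> K * norm x"
    "lm > 0" "\<And>x. lm * (norm x)^2 \<le> x \<bullet> (J *v x)"
    "c > 0" "c * (2*K + kO^2 / (2*kR)) \<le> kO / 2" "c * K \<le> lm / 2" "c * K \<le> kR"
proof -
  obtain K where K: "K > 0" and JK: "\<And>x. norm (J *v x) \<le> norm x * K"
    using bounded_linear.pos_bounded[OF matrix_vector_mul_bounded_linear[of J]] by blast
  obtain u where u: "norm u = 1" and min: "\<And>x. (u \<bullet> (J *v u)) * (norm x)^2 \<le> x \<bullet> (J *v x)"
    using quadratic_form_min[of J] by blast
  have "u \<noteq> 0" using u by auto
  then have lm: "u \<bullet> (J *v u) > 0" using J by (simp add: sym_posdef_def)
  define D where "D = 2*K + kO^2 / (2*kR)"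
  have D: "D > 0" unfolding D_def using K kR by (simp add: add_pos_nonneg)
  define c where "c = min (kO / (2 * D)) (min ((u \<bullet> (J *v u)) / (2*K)) (kR / K))"
  have c: "c > 0" unfolding c_def using kO D lm K kR by simp
  have "c * D \<le> kO / (2 * D) * D" using c by (intro mult_right_mono) (auto simp: c_def D less_imp_le)
  also have "\<dots> = kO / 2" using D by simp
  finally have c_small: "c * D \<le> kO / 2" .
  have "c * K \<le> (u \<bullet> (J *v u)) / (2*K) * K" "c * K \<le> kR / K * K"
    using K by (intro mult_right_mono; simp add: c_def)+
  then have "c * K \<le> (u \<bullet> (J *v u)) / 2" "c * K \<le> kR" using K by simp_all
  moreover have "norm (J *v x) \<le> K * norm x" for x using JK[of x] by (simp add: mult.commute)
  ultimately show ?thesis using that[OF K _ lm min c c_small[unfolded D_def]] by blast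
qed


section \<open>A closed-loop trajectory\<close>

locale closed_loop =
  fixes J Rd :: "real^3^3" and kR kO :: real
    and R :: "real \<Rightarrow> real^3^3" and Om Om' :: "real \<Rightarrow> real^3"
  assumes J: "sym_posdef J" and Rd: "Rd \<in> SO3" and kR: "kR > 0" and kO: "kO > 0"
    and R0: "R 0 \<in> SO3"
    and R_deriv: "\<forall>t\<ge>0. (R has_vector_derivative (R t ** hat (Om t))) (at t within {0..})"
    and Om_deriv: "\<forall>t\<ge>0. (Om has_vector_derivative Om' t) (at t within {0..})"
    and euler: "\<forall>t\<ge>0. J *v Om' t + cross3 (Om t) (J *v Om t)
               = - kR *\<^sub>R eR (R t) Rd - kO *\<^sub>R eOmega (R t) Rd (Om t) 0"
begin

definition "Q t = transpose Rd ** R t"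
definition "tau t = 1 + trace (Q t)"
definition "w t = sqrt (tau t) / 2"
definition "v t = eR (R t) Rd"

definition "err t = (norm (v t))^2 + (norm (Om t))^2"

lemma v_axial: "v t = (1 / (2 * sqrt (tau t))) *\<^sub>R axial (Q t)"
  unfolding v_def eR_def tau_def axial_def Q_def by (simp add: matrix_transpose_mul)

lemma Psi_w: "Psi (R t) Rd = 2 - 2 * w t"
  unfolding Psi_def w_def tau_def Q_def by simp

lemma eOmega_Om: "eOmega (R t) Rd (Om t) 0 = Om t"
  unfolding eOmega_def by simp

lemma tau_pos: "w t > 0 \<Longrightarrow> tau t > 0"
  unfolding w_def by simp

lemma Q_deriv: "t \<ge> 0 \<Longrightarrow> (Q has_vector_derivative (Q t ** hat (Om t))) (at t within {0..})"
  unfolding Q_def[abs_def]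
  using bounded_linear.has_vector_derivative[OF
      bounded_bilinear.bounded_linear_right[OF bounded_bilinear_matrix_mult] R_deriv[rule_format]]
  by (simp add: matrix_mul_assoc)

lemma Q_continuous: "continuous_on {0..} Q"
  by (rule continuous_on_vector_derivative) (use Q_deriv in auto)

text \<open>\<open>Q Q^T\<close> has derivative \<open>Q (hat \<Omega> + (hat \<Omega>)^T) Q^T = 0\<close>, so Q stays orthogonal.\<close>
lemma Q_orthogonal:
  assumes "t \<ge> 0" shows "Q t ** transpose (Q t) = mat 1"
proof -
  define P where "P t = Q t ** transpose (Q t)" for t
  have "(P has_vector_derivative 0) (at s within {0..})" if "s \<ge> 0" for s
  proof -
    have "((\<lambda>t. transpose (Q t)) has_vector_derivative transpose (Q s ** hat (Om s))) (at s within {0..})"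
      by (rule bounded_linear.has_vector_derivative[OF bounded_linear_transpose Q_deriv[OF that]])
    then have "(P has_vector_derivative (Q s ** transpose (Q s ** hat (Om s))
        + (Q s ** hat (Om s)) ** transpose (Q s))) (at s within {0..})"
      unfolding P_def[abs_def]
      by (rule bounded_bilinear.has_vector_derivative[OF bounded_bilinear_matrix_mult Q_deriv[OF that]])
    moreover have "Q s ** transpose (Q s ** hat (Om s)) + (Q s ** hat (Om s)) ** transpose (Q s) = 0"
      by (simp add: matrix_transpose_mul hat_transpose matrix_mul_assoc mat3_simps algebra_simps)
    ultimately show ?thesis by simp
  qed
  then obtain C where C: "\<And>s. s \<in> {0..} \<Longrightarrow> P s = C"
    using has_vector_derivative_zero_constant[of "{0::real..}" P] by auto
  have "P 0 = transpose Rd ** (R 0 ** transpose (R 0)) ** Rd"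
    unfolding P_def Q_def by (simp add: matrix_transpose_mul matrix_mul_assoc)
  also have "\<dots> = mat 1" using SO3_mult_transpose[OF R0] Rd by (simp add: SO3_def)
  finally show ?thesis using C[of t] C[of 0] assms unfolding P_def by simp
qed

text \<open>The determinant of \<open>Q\<close> is continuous with values in \<open>{-1, 1}\<close> and starts at 1.\<close>
lemma Q_SO3:
  assumes t: "t \<ge> 0" shows "Q t \<in> SO3"
proof -
  have sq: "det (Q s) * det (Q s) = 1" if "s \<ge> 0" for s
    using arg_cong[OF Q_orthogonal[OF that], of det] by (simp add: det_mul)
  have d0: "det (Q 0) = 1" unfolding Q_def using Rd R0 by (simp add: det_mul SO3_def)
  have cont: "continuous_on {0..t} (\<lambda>s. det (Q s))"
    unfolding det_3 by (intro continuous_intros continuous_on_subset[OF Q_continuous]) auto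
  have "det (Q t) = 1"
  proof (rule ccontr)
    assume "det (Q t) \<noteq> 1"
    moreover have "(det (Q t) - 1) * (det (Q t) + 1) = 0" using sq[OF t] by (simp add: algebra_simps)
    ultimately have "det (Q t) = -1" by simp
    then obtain x where "0 \<le> x" "det (Q x) = 0"
      using IVT2'[of "\<lambda>s. det (Q s)" t 0 0] d0 t cont by auto
    then show False using sq[of x] by simp
  qed
  moreover have "transpose (Q t) ** Q t = mat 1"
    using Q_orthogonal[OF t] matrix_left_right_inverse by blast
  ultimately show ?thesis by (simp add: SO3_def)
qed

lemma tau_deriv:
  assumes t: "t \<ge> 0"
  shows "(tau has_real_derivative - (axial (Q t) \<bullet> Om t)) (at t within {0..})"
proof -
  have "((\<lambda>s. trace (Q s)) has_vector_derivative trace (Q t ** hat (Om t))) (at t within {0..})"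
    by (rule bounded_linear.has_vector_derivative[OF bounded_linear_trace Q_deriv[OF t]])
  then have "((\<lambda>s. 1 + trace (Q s)) has_vector_derivative trace (Q t ** hat (Om t))) (at t within {0..})"
    by (simp add: has_vector_derivative_add_const add.commute[of 1])
  then show ?thesis
    unfolding tau_def[abs_def] has_real_derivative_iff_has_vector_derivative trace_mult_hat .
qed

lemma axial_Q_deriv:
  "t \<ge> 0 \<Longrightarrow> ((\<lambda>s. axial (Q s)) has_vector_derivative (trace (Q t) *\<^sub>R Om t - transpose (Q t) *v Om t))
     (at t within {0..})"
  using bounded_linear.has_vector_derivative[OF bounded_linear_axial Q_deriv] by (simp add: axial_mult_hat)

lemma v_w_unit:
  assumes t: "t \<ge> 0" and w0: "w t > 0"
  shows "(norm (v t))^2 + (w t)^2 = 1"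
proof -
  define s where "s = sqrt (tau t)"
  have s0: "s > 0" and ss: "s * s = tau t" using tau_pos[OF w0] by (auto simp: s_def)
  have "norm (v t) = norm (axial (Q t)) / (2 * s)" using s0 by (simp add: v_axial s_def[symmetric])
  then have "(norm (v t))^2 = (norm (axial (Q t)))^2 / (4 * tau t)"
    by (simp add: power_divide power2_eq_square ss[symmetric] algebra_simps)
  also have "\<dots> = tau t * (4 - tau t) / (4 * tau t)"
    using SO3_norm_axial[OF Q_SO3[OF t]] by (simp add: tau_def algebra_simps)
  also have "\<dots> = (4 - tau t) / 4" using tau_pos[OF w0] by simp
  finally have "(norm (v t))^2 = (4 - tau t) / 4" .
  moreover have "(w t)^2 = tau t / 4" unfolding w_def s_def[symmetric] using ss
    by (simp add: power_divide power2_eq_square)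
  ultimately show ?thesis by simp
qed

lemma w_deriv:
  assumes "t \<ge> 0" "w t > 0"
  shows "(w has_real_derivative - (v t \<bullet> Om t) / 2) (at t within {0..})"
proof -
  have "((\<lambda>s. sqrt (tau s)) has_real_derivative inverse (sqrt (tau t)) / 2 * (- (axial (Q t) \<bullet> Om t)))
      (at t within {0..})"
    by (rule DERIV_chain2[OF DERIV_real_sqrt[OF tau_pos[OF assms(2)]] tau_deriv[OF assms(1)]])
  then have "(w has_real_derivative inverse (sqrt (tau t)) / 2 * (- (axial (Q t) \<bullet> Om t)) / 2)
      (at t within {0..})"
    unfolding w_def[abs_def] by (rule DERIV_cdivide)
  moreover have "inverse (sqrt (tau t)) / 2 * (- (axial (Q t) \<bullet> Om t)) / 2 = - (v t \<bullet> Om t) / 2"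
    by (simp add: v_axial inverse_eq_divide)
  ultimately show ?thesis by simp
qed

text \<open>The algebra behind \<open>eR' = (w \<Omega> + eR \<times> \<Omega>)/2\<close>, stated for \<open>s = sqrt \<tau>\<close>,
  \<open>a = axial Q\<close>, \<open>Mx = Q \<Omega>\<close> and \<open>MTx = Q^T \<Omega>\<close>.\<close>
lemma eR_rate_identity:
  fixes x Mx MTx a :: "real^3" and s tr :: real
  assumes s: "s > 0" "s * s = 1 + tr"
    and outer: "(a \<bullet> x) *\<^sub>R a = (s * s) *\<^sub>R ((Mx + MTx) - (tr - 1) *\<^sub>R x)"
    and skew: "cross3 a x = Mx - MTx"
  shows "(1 / (2 * s)) *\<^sub>R (tr *\<^sub>R x - MTx) + ((a \<bullet> x) / (4 * (s * s) * s)) *\<^sub>R a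
       = (1/2) *\<^sub>R ((s/2) *\<^sub>R x + cross3 ((1 / (2 * s)) *\<^sub>R a) x)"
proof -
  have "((a \<bullet> x) / (4 * (s * s) * s)) *\<^sub>R a = (1 / (4 * (s * s) * s)) *\<^sub>R ((a \<bullet> x) *\<^sub>R a)"
    by simp
  also have "\<dots> = (1 / (4 * s)) *\<^sub>R ((Mx + MTx) - (tr - 1) *\<^sub>R x)"
    unfolding outer scaleR_scaleR using s(1) by (simp add: field_simps)
  finally have outer': "((a \<bullet> x) / (4 * (s * s) * s)) *\<^sub>R a
      = (1 / (4 * s)) *\<^sub>R ((Mx + MTx) - (tr - 1) *\<^sub>R x)" .
  have skew': "cross3 ((1 / (2 * s)) *\<^sub>R a) x = (1 / (2 * s)) *\<^sub>R (Mx - MTx)"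
    by (simp add: cross_mult_left skew)
  have tr: "tr = s * s - 1" using s by simp
  show ?thesis unfolding outer' skew' tr using s(1) by (simp add: vec_eq_iff field_simps)
qed

lemma inverse_sqrt_tau_deriv:
  assumes t: "t \<ge> 0" and w0: "w t > 0"
  shows "((\<lambda>r. inverse (2 * sqrt (tau r))) has_real_derivative
      (axial (Q t) \<bullet> Om t) / (4 * (sqrt (tau t) * sqrt (tau t)) * sqrt (tau t))) (at t within {0..})"
proof -
  define s where "s = sqrt (tau t)"
  have s0: "s > 0" using tau_pos[OF w0] by (simp add: s_def)
  have "((\<lambda>r. sqrt (tau r)) has_real_derivative inverse s / 2 * (- (axial (Q t) \<bullet> Om t)))
      (at t within {0..})"
    unfolding s_def by (rule DERIV_chain2[OF DERIV_real_sqrt[OF tau_pos[OF w0]] tau_deriv[OF t]])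
  then have "((\<lambda>r. 2 * sqrt (tau r)) has_real_derivative 2 * (inverse s / 2 * (- (axial (Q t) \<bullet> Om t))))
      (at t within {0..})"
    by (rule DERIV_cmult)
  then have "((\<lambda>r. inverse (2 * sqrt (tau r))) has_real_derivative
      - (2 * (inverse s / 2 * (- (axial (Q t) \<bullet> Om t))) * inverse ((2 * sqrt (tau t)) ^ Suc (Suc 0))))
      (at t within {0..})"
    by (rule DERIV_inverse_fun) (use s0 s_def in simp)
  moreover have "- (2 * (inverse s / 2 * (- (axial (Q t) \<bullet> Om t))) * inverse ((2 * sqrt (tau t)) ^ Suc (Suc 0)))
      = (axial (Q t) \<bullet> Om t) / (4 * (s * s) * s)"
    unfolding s_def[symmetric] using s0 by (simp add: field_simps)
  ultimately have "((\<lambda>r. inverse (2 * sqrt (tau r))) has_real_derivative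
      (axial (Q t) \<bullet> Om t) / (4 * (s * s) * s)) (at t within {0..})"
    by (simp only:)
  then show ?thesis unfolding s_def .
qed

lemma v_deriv:
  assumes t: "t \<ge> 0" and w0: "w t > 0"
  shows "(v has_vector_derivative (1/2) *\<^sub>R (w t *\<^sub>R Om t + cross3 (v t) (Om t))) (at t within {0..})"
proof -
  define s where "s = sqrt (tau t)"
  have s0: "s > 0" and ss: "s * s = tau t" using tau_pos[OF w0] by (auto simp: s_def)
  have v_fun: "v = (\<lambda>r. inverse (2 * sqrt (tau r)) *\<^sub>R axial (Q r))"
    by (rule ext) (simp only: v_axial inverse_eq_divide)
  have deriv: "(v has_vector_derivative inverse (2 * s) *\<^sub>R (trace (Q t) *\<^sub>R Om t - transpose (Q t) *v Om t)
      + ((axial (Q t) \<bullet> Om t) / (4 * (s * s) * s)) *\<^sub>R axial (Q t)) (at t within {0..})"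
    unfolding v_fun s_def
    by (rule has_vector_derivative_scaleR[OF inverse_sqrt_tau_deriv[OF t w0] axial_Q_deriv[OF t]])
  have identity: "inverse (2 * s) *\<^sub>R (trace (Q t) *\<^sub>R Om t - transpose (Q t) *v Om t)
      + ((axial (Q t) \<bullet> Om t) / (4 * (s * s) * s)) *\<^sub>R axial (Q t)
      = (1/2) *\<^sub>R ((s/2) *\<^sub>R Om t + cross3 ((1 / (2 * s)) *\<^sub>R axial (Q t)) (Om t))"
    unfolding inverse_eq_divide
  proof (rule eR_rate_identity[OF s0])
    show "s * s = 1 + trace (Q t)" using ss by (simp add: tau_def)
    show "(axial (Q t) \<bullet> Om t) *\<^sub>R axial (Q t)
        = (s * s) *\<^sub>R ((Q t *v Om t + transpose (Q t) *v Om t) - (trace (Q t) - 1) *\<^sub>R Om t)"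
      using SO3_axial_outer[OF Q_SO3[OF t], of "Om t"] ss
      by (simp add: tau_def matrix_vector_mult_add_rdistrib)
    show "cross3 (axial (Q t)) (Om t) = Q t *v Om t - transpose (Q t) *v Om t"
      using skew_part_mult[of "Q t" "Om t"] by (simp add: matrix_vector_mult_diff_rdistrib)
  qed
  have w_s: "w t = s / 2" and v_s: "v t = (1 / (2 * s)) *\<^sub>R axial (Q t)"
    by (simp_all add: w_def s_def v_axial)
  show ?thesis unfolding w_s v_s using deriv unfolding identity .
qed

lemma euler_solved:
  assumes t: "t \<ge> 0"
  shows "J *v Om' t = - cross3 (Om t) (J *v Om t) - kR *\<^sub>R v t - kO *\<^sub>R Om t"
proof -
  have eq: "J *v Om' t + cross3 (Om t) (J *v Om t) = - kR *\<^sub>R v t - kO *\<^sub>R Om t"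
    using euler[rule_format, OF t] unfolding eOmega_Om v_def[symmetric] .
  have "J *v Om' t = (J *v Om' t + cross3 (Om t) (J *v Om t)) - cross3 (Om t) (J *v Om t)" by simp
  also have "\<dots> = - kR *\<^sub>R v t - kO *\<^sub>R Om t - cross3 (Om t) (J *v Om t)" unfolding eq ..
  also have "\<dots> = - cross3 (Om t) (J *v Om t) - kR *\<^sub>R v t - kO *\<^sub>R Om t" by (simp add: algebra_simps)
  finally show ?thesis .
qed

lemma Om_continuous: "continuous_on {0..} Om"
  by (rule continuous_on_vector_derivative) (use Om_deriv in auto)

lemma JOm_continuous: "continuous_on {0..} (\<lambda>t. J *v Om t)"
  by (rule linear_continuous_on_compose[OF Om_continuous]) simp

lemma w_continuous: "continuous_on {0..} w"
  unfolding w_def[abs_def] tau_def[abs_def] trace_def sum_3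
  by (intro continuous_intros Q_continuous) auto

lemma JOm_deriv: "t \<ge> 0 \<Longrightarrow> ((\<lambda>s. J *v Om s) has_vector_derivative J *v Om' t) (at t within {0..})"
  using bounded_linear.has_vector_derivative[OF matrix_vector_mul_bounded_linear Om_deriv[rule_format]] .

definition "kin t = Om t \<bullet> (J *v Om t)"

lemma kin_nonneg: "kin t \<ge> 0"
  using J by (cases "Om t = 0") (auto simp: kin_def sym_posdef_def intro: less_imp_le)

lemma kin_deriv:
  assumes "t \<ge> 0"
  shows "(kin has_real_derivative 2 * (Om t \<bullet> (J *v Om' t))) (at t within {0..})"
proof -
  have "(kin has_vector_derivative (Om t \<bullet> (J *v Om' t) + Om' t \<bullet> (J *v Om t))) (at t within {0..})"
    unfolding kin_def[abs_def]
    by (rule bounded_bilinear.has_vector_derivative[OF bounded_bilinear_inner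
          Om_deriv[rule_format, OF assms] JOm_deriv[OF assms]])
  moreover have "Om' t \<bullet> (J *v Om t) = Om t \<bullet> (J *v Om' t)"
    using symmetric_inner_swap[of J "Om' t" "Om t"] J by (simp add: sym_posdef_def inner_commute)
  ultimately show ?thesis by (simp add: has_real_derivative_iff_has_vector_derivative)
qed

definition "V t = kin t / 2 + 2 * kR * (1 - w t)"

lemma V_deriv:
  assumes "t \<ge> 0" "w t > 0"
  shows "(V has_real_derivative - kO * (norm (Om t))^2) (at t within {0..})"
proof -
  have "(V has_real_derivative (2 * (Om t \<bullet> (J *v Om' t))) / 2 + 2 * kR * (0 - (- (v t \<bullet> Om t) / 2)))
      (at t within {0..})"
    unfolding V_def[abs_def] by (intro DERIV_add DERIV_cdivide DERIV_cmult DERIV_diff DERIV_const kin_deriv w_deriv assms)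
  moreover have "(2 * (Om t \<bullet> (J *v Om' t))) / 2 + 2 * kR * (0 - (- (v t \<bullet> Om t) / 2)) = - kO * (norm (Om t))^2"
    unfolding euler_solved[OF assms(1)]
    by (simp add: inner_diff_right dot_cross_self power2_norm_eq_inner inner_commute[of "Om t" "v t"]
        inner_add_right field_simps)
  ultimately show ?thesis by simp
qed

lemma V_continuous: "continuous_on {0..} V"
  unfolding V_def[abs_def] kin_def[abs_def]
  by (intro continuous_intros Om_continuous JOm_continuous w_continuous) auto

lemma V_nonincreasing:
  assumes T: "T \<ge> 0" and pos: "\<And>u. 0 \<le> u \<Longrightarrow> u \<le> T \<Longrightarrow> w u > 0"
  shows "V T \<le> V 0"
proof (rule DERIV_nonpos_imp_decreasing_open[OF T])
  fix x assume x: "0 < x" "x < T"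
  have "(V has_real_derivative - kO * (norm (Om x))^2) (at x)"
    using V_deriv[of x] pos[of x] x at_within_nonneg[OF x(1)] by simp
  then show "\<exists>y. (V has_real_derivative y) (at x) \<and> y \<le> 0" using kO by auto
qed (rule continuous_on_subset[OF V_continuous], auto)

definition "W c t = V t + c * (v t \<bullet> (J *v Om t))"

definition "W_rate c t = - kO * (norm (Om t))^2
    + c * (((1/2) *\<^sub>R (w t *\<^sub>R Om t + cross3 (v t) (Om t))) \<bullet> (J *v Om t)
           + v t \<bullet> (- cross3 (Om t) (J *v Om t) - kR *\<^sub>R v t - kO *\<^sub>R Om t))"

lemma W_deriv:
  assumes "t \<ge> 0" "w t > 0"
  shows "(W c has_real_derivative W_rate c t) (at t within {0..})"
proof -
  have "((\<lambda>s. v s \<bullet> (J *v Om s)) has_vector_derivative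
      v t \<bullet> (J *v Om' t) + ((1/2) *\<^sub>R (w t *\<^sub>R Om t + cross3 (v t) (Om t))) \<bullet> (J *v Om t))
      (at t within {0..})"
    by (rule bounded_bilinear.has_vector_derivative[OF bounded_bilinear_inner v_deriv[OF assms]
          JOm_deriv[OF assms(1)]])
  then have cross: "((\<lambda>s. v s \<bullet> (J *v Om s)) has_real_derivative
      v t \<bullet> (J *v Om' t) + ((1/2) *\<^sub>R (w t *\<^sub>R Om t + cross3 (v t) (Om t))) \<bullet> (J *v Om t))
      (at t within {0..})"
    by (simp add: has_real_derivative_iff_has_vector_derivative)
  have "(W c has_real_derivative - kO * (norm (Om t))^2 + c * (v t \<bullet> (J *v Om' t)
      + ((1/2) *\<^sub>R (w t *\<^sub>R Om t + cross3 (v t) (Om t))) \<bullet> (J *v Om t))) (at t within {0..})"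
    unfolding W_def[abs_def] by (intro DERIV_add DERIV_cmult V_deriv[OF assms] cross)
  then show ?thesis unfolding W_rate_def euler_solved[OF assms(1)] by (simp add: algebra_simps)
qed

end

locale admissible_closed_loop = closed_loop +
  assumes Psi0: "Psi (R 0) Rd < 2"
    and Om0: "(norm (Om 0))^2 < 2 * kR / lambda_max J * (2 - Psi (R 0) Rd)"
begin

text \<open>The hypothesis on \<open>\<Omega>(0)\<close> says precisely that the initial energy is below the
  level \<open>2 kR\<close> of the set \<open>w = 0\<close>, i.e. \<open>\<Psi> = 2\<close>.\<close>
lemma V_initial: "V 0 < 2 * kR"
proof -
  have lm: "lambda_max J > 0" using lambda_max_bound[OF J] by simp
  have "kin 0 \<le> lambda_max J * (norm (Om 0))^2" using lambda_max_bound[OF J] by (simp add: kin_def)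
  also have "lambda_max J * (norm (Om 0))^2 < lambda_max J * (2 * kR / lambda_max J * (2 - Psi (R 0) Rd))"
    using Om0 lm by (rule mult_strict_left_mono)
  also have "\<dots> = 4 * kR * w 0" using lm by (simp add: Psi_w)
  finally show ?thesis unfolding V_def by (simp add: algebra_simps)
qed

lemma w_pos:
  assumes t: "t \<ge> 0" shows "w t > 0"
proof (rule positivity_barrier[where a = "1 - V 0 / (2 * kR)", OF w_continuous _ _ _ t])
  show "1 - V 0 / (2 * kR) > 0" using V_initial kR by (simp add: field_simps)
  show "w 0 > 0" using Psi0 by (simp add: Psi_w)
  fix T assume T: "T \<ge> 0" and pos: "\<And>u. 0 \<le> u \<Longrightarrow> u \<le> T \<Longrightarrow> w u > 0"
  have "2 * kR * (1 - w T) \<le> V T" unfolding V_def using kin_nonneg[of T] by simp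
  also have "\<dots> \<le> V 0" by (rule V_nonincreasing[OF T pos])
  finally show "1 - V 0 / (2 * kR) \<le> w T" using kR by (simp add: field_simps)
qed

lemma W_continuous: "continuous_on {0..} (W c)"
proof -
  have "continuous_on {0..} v"
    by (rule continuous_on_vector_derivative) (use v_deriv w_pos in auto)
  then show ?thesis unfolding W_def[abs_def]
    by (intro continuous_intros V_continuous JOm_continuous)
qed

lemma unit_quaternion: "t \<ge> 0 \<Longrightarrow> (norm (v t))^2 + (w t)^2 = 1"
  using v_w_unit w_pos by blast

end

context admissible_closed_loop
begin

context
  fixes K lm c :: real
  assumes K: "K > 0" and JK: "\<And>x. norm (J *v x) \<le> K * norm x"
    and lm: "lm > 0" and Jl: "\<And>x. lm * (norm x)^2 \<le> x \<bullet> (J *v x)"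
    and c: "c > 0" and c_small: "c * (2*K + kO^2 / (2*kR)) \<le> kO / 2"
    and cK_lm: "c * K \<le> lm / 2" and cK_kR: "c * K \<le> kR"
begin

lemma W_lower:
  assumes t: "t \<ge> 0" shows "min (lm/4) (kR/2) * err t \<le> W c t"
  unfolding err_def W_def V_def kin_def
  by (rule lyapunov_lower_bound[OF w_pos[OF t] unit_quaternion[OF t] JK[of "Om t"]
        less_imp_le[OF K] Jl[of "Om t"] less_imp_le[OF c] cK_lm cK_kR])

lemma W_upper:
  assumes t: "t \<ge> 0" shows "W c t \<le> (K + 2*kR + c*K) * err t"
  unfolding err_def W_def V_def kin_def
  by (rule lyapunov_upper_bound[OF w_pos[OF t] unit_quaternion[OF t] JK[of "Om t"]
        less_imp_le[OF K] less_imp_le[OF kR] less_imp_le[OF c]])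

lemma W_rate_le:
  assumes t: "t \<ge> 0" shows "W_rate c t \<le> - min (kO/2) (c*kR/2) * err t"
  unfolding W_rate_def err_def
  by (rule lyapunov_decrease_bound[OF w_pos[OF t] unit_quaternion[OF t] JK[of "Om t"]
        less_imp_le[OF K] kR less_imp_le[OF c] c_small])

text \<open>With \<open>a err \<le> W \<le> b err\<close> and \<open>W' \<le> -\<gamma> err \<le> -(\<gamma>/b) W\<close>.\<close>
lemma exponential_decay:
  assumes t: "t \<ge> 0"
  shows "err t \<le> (K + 2*kR + c*K) / min (lm/4) (kR/2) * err 0
               * exp (- (min (kO/2) (c*kR/2) / (K + 2*kR + c*K)) * t)"
proof -
  define a where "a = min (lm/4) (kR/2)"
  define b where "b = K + 2*kR + c*K"
  define \<gamma> where "\<gamma> = min (kO/2) (c*kR/2)"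
  have a: "a > 0" and b: "b > 0" and \<gamma>: "\<gamma> > 0"
    unfolding a_def b_def \<gamma>_def using lm kR kO K c by (simp_all add: add_pos_pos)
  have "W c t \<le> W c 0 * exp (- (\<gamma> / b) * t)"
  proof (rule exponential_decay_comparison[where f = "W c" and f' = "W_rate c", OF t])
    show "continuous_on {0..t} (W c)" using W_continuous by (rule continuous_on_subset) auto
    fix x :: real assume x: "0 < x" "x < t"
    then have x0: "x \<ge> 0" by simp
    show "(W c has_real_derivative W_rate c x) (at x)"
      using W_deriv[OF x0 w_pos[OF x0]] at_within_nonneg[OF x(1)] by simp
    have "W_rate c x \<le> - \<gamma> * err x" using W_rate_le[OF x0] unfolding \<gamma>_def .
    also have "\<dots> \<le> - (\<gamma> / b) * W c x"
    proof -
      have "(\<gamma> / b) * W c x \<le> (\<gamma> / b) * (b * err x)"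
        using W_upper[OF x0] \<gamma> b unfolding b_def by (intro mult_left_mono) auto
      then show ?thesis using b by simp
    qed
    finally show "W_rate c x \<le> - (\<gamma> / b) * W c x" .
  qed
  also have "\<dots> \<le> b * err 0 * exp (- (\<gamma> / b) * t)"
    using W_upper[of 0] unfolding b_def by (intro mult_right_mono) auto
  finally have "W c t \<le> b * err 0 * exp (- (\<gamma> / b) * t)" .
  with W_lower[OF t] have "a * err t \<le> b * err 0 * exp (- (\<gamma> / b) * t)"
    unfolding a_def by (rule order_trans)
  then have "err t \<le> b * err 0 * exp (- (\<gamma> / b) * t) / a" using a by (simp add: le_divide_eq mult.commute)
  also have "\<dots> = b / a * err 0 * exp (- (\<gamma> / b) * t)" by simp
  finally show ?thesis unfolding a_def b_def \<gamma>_def .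
qed

end

end


theorem proposition4:
  fixes J Rd :: "real^3^3" and kR kO :: real
  assumes J: "sym_posdef J"
    and Rd: "Rd \<in> SO3"
    and kR: "kR > 0" and kO: "kO > 0"
  shows "\<exists>C \<beta>. C > 0 \<and> \<beta> > 0 \<and>
    (\<forall>(R :: real \<Rightarrow> real^3^3) (\<Omega> :: real \<Rightarrow> real^3) (\<Omega>' :: real \<Rightarrow> real^3).
      R 0 \<in> SO3 \<longrightarrow>
      (\<forall>t\<ge>0. (R has_vector_derivative (R t ** hat (\<Omega> t))) (at t within {0..})) \<longrightarrow>
      (\<forall>t\<ge>0. (\<Omega> has_vector_derivative \<Omega>' t) (at t within {0..})) \<longrightarrow>
      (\<forall>t\<ge>0. J *v \<Omega>' t + cross3 (\<Omega> t) (J *v \<Omega> t)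
               = - kR *\<^sub>R eR (R t) Rd - kO *\<^sub>R eOmega (R t) Rd (\<Omega> t) 0) \<longrightarrow>
      Psi (R 0) Rd < 2 \<longrightarrow>
      (norm (\<Omega> 0))\<^sup>2 < 2 * kR / lambda_max J * (2 - Psi (R 0) Rd) \<longrightarrow>
      (\<forall>t\<ge>0. Psi (R t) Rd < 2 \<and>
         (norm (eR (R t) Rd))\<^sup>2 + (norm (eOmega (R t) Rd (\<Omega> t) 0))\<^sup>2
           \<le> C * ((norm (eR (R 0) Rd))\<^sup>2 + (norm (eOmega (R 0) Rd (\<Omega> 0) 0))\<^sup>2)
               * exp (- \<beta> * t)))"
proof -
  obtain K lm c where K: "K > 0" "\<And>x. norm (J *v x) \<le> K * norm x"
    and lm: "lm > 0" "\<And>x. lm * (norm x)^2 \<le> x \<bullet> (J *v x)"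
    and c: "c > 0" "c * (2*K + kO^2 / (2*kR)) \<le> kO / 2" "c * K \<le> lm / 2" "c * K \<le> kR"
    using lyapunov_constants[OF J kR kO] by blast
  show ?thesis
  proof (intro exI conjI allI impI)
    show "(K + 2*kR + c*K) / min (lm/4) (kR/2) > 0" "min (kO/2) (c*kR/2) / (K + 2*kR + c*K) > 0"
      using K lm c kR kO by (simp_all add: add_pos_pos)
    fix R :: "real \<Rightarrow> real^3^3" and \<Omega> \<Omega>' :: "real \<Rightarrow> real^3" and t :: real
    assume R0: "R 0 \<in> SO3"
      and R': "\<forall>t\<ge>0. (R has_vector_derivative (R t ** hat (\<Omega> t))) (at t within {0..})"
      and \<Omega>': "\<forall>t\<ge>0. (\<Omega> has_vector_derivative \<Omega>' t) (at t within {0..})"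
      and euler: "\<forall>t\<ge>0. J *v \<Omega>' t + cross3 (\<Omega> t) (J *v \<Omega> t)
               = - kR *\<^sub>R eR (R t) Rd - kO *\<^sub>R eOmega (R t) Rd (\<Omega> t) 0"
      and Psi0: "Psi (R 0) Rd < 2"
      and \<Omega>0: "(norm (\<Omega> 0))\<^sup>2 < 2 * kR / lambda_max J * (2 - Psi (R 0) Rd)"
      and t: "t \<ge> 0"
    interpret admissible_closed_loop J Rd kR kO R \<Omega> \<Omega>'
      by unfold_locales (use J Rd kR kO R0 R' \<Omega>' euler Psi0 \<Omega>0 in auto)
    show "Psi (R t) Rd < 2" using w_pos[OF t] by (simp add: Psi_w)
    show "(norm (eR (R t) Rd))\<^sup>2 + (norm (eOmega (R t) Rd (\<Omega> t) 0))\<^sup>2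
        \<le> (K + 2*kR + c*K) / min (lm/4) (kR/2)
          * ((norm (eR (R 0) Rd))\<^sup>2 + (norm (eOmega (R 0) Rd (\<Omega> 0) 0))\<^sup>2)
          * exp (- (min (kO/2) (c*kR/2) / (K + 2*kR + c*K)) * t)"
      using exponential_decay[OF K lm c t] by (simp add: err_def v_def eOmega_Om)
  qed
qed

end
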